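(* Let $K\subseteq L$ be convex bodies in $\mathbb{R}^d$ such that the origin is in the interior of $K\cap L$, and assume there is no nonempty finite collection of contact pairs $(v_1,p_1),\dots,(v_m,p_m)$ of $K$ and $L$ together with positive weights $\alpha_1,\dots,\alpha_m$ satisfying \[ \sum_{i=1}^m\alpha_i\,p_i\otimes v_i=\sum_{i=1}^m\alpha_i\,v_i\otimes p_i. \] Then for some $\varepsilon>0$ there is a differentiable path $R_t$, $t\in(0,\varepsilon]$, of orthogonal transformations of $\mathbb{R}^d$ such that $R_tK\subset\operatorname{int}L$ for all $t\in(0,\varepsilon]$.
   Context: A convex body is a compact convex set with nonempty interior. The polar of $S$ is $S^\circ=\{p:\langle x,p\rangle\le1\ \forall x\in S\}$. For convex bodies $K\subseteq L$, a contact pair of $K$ and $L$ is a pair $(v,p)$ with $v\in\partial K\cap\partial L$, $p\in\partial K^\circ\cap\partial L^\circ$, $\langle p,v\rangle=1$. For vectors $p,v$, $p\otimes v$ is the operator $x\mapsto\langle v,x\rangle p$. *)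

theory Defs
  imports "HOL-Analysis.Analysis"
begin

definition convex_body :: "(real^'n) set \<Rightarrow> bool" where
  "convex_body S \<longleftrightarrow> compact S \<and> convex S \<and> interior S \<noteq> {}"

definition polar :: "(real^'n) set \<Rightarrow> (real^'n) set" where
  "polar S = {p. \<forall>x\<in>S. inner x p \<le> 1}"

definition contact_pair :: "(real^'n) set \<Rightarrow> (real^'n) set \<Rightarrow> real^'n \<Rightarrow> real^'n \<Rightarrow> bool" where
  "contact_pair K L v p \<longleftrightarrow>
     v \<in> frontier K \<inter> frontier L \<and>
     p \<in> frontier (polar K) \<inter> frontier (polar L) \<and>
     inner p v = 1"

text \<open>Matrix of the operator p \<otimes> v : x \<mapsto> (v \<bullet> x) p, i.e. p v^T.\<close>
definition tensor :: "real^'n \<Rightarrow> real^'n \<Rightarrow> real^'n^'n" where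
  "tensor p v = (\<chi> i j. p$i * v$j)"

end

theory Submission
  imports Defs
begin

(*
  Let C be the compact set of pairs (v, p) in K \<times> polar L with <v, p> = 1; every such pair is
  a contact pair of K and L. The hypothesis says exactly that 0 is not in the convex hull of
  {p \<otimes> v - v \<otimes> p : (v, p) \<in> C}, so a hyperplane separates them: there are a skew
  matrix S and b > 0 with <p, S v> > b on C. The Cayley transform R = (I - tS)(I + tS)^-1 is
  orthogonal and R x = x - 2t S x + O(t^2). For all x \<in> K and p \<in> polar L this gives
  <R x, p> < 1 once t > 0 is small: where <p, S x> > b the first-order term wins, and elsewhere
  compactness yields <x, p> \<le> 1 - \<eta>. Hence R K lies in the interior of L, and the constant
  path at R is the required differentiable path.
*)

lemma closed_polar: "closed (polar S)"
proof -
  have "polar S = (\<Inter>x\<in>S. {p. inner x p \<le> 1})"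
    by (auto simp: polar_def)
  then show ?thesis
    by (auto intro!: closed_INT closed_Collect_le continuous_intros)
qed

lemma bounded_polar:
  assumes "0 \<in> interior S"
  shows "bounded (polar S)"
proof -
  obtain e where e: "e > 0" "ball 0 e \<subseteq> S"
    using assms mem_interior by blast
  have "norm p \<le> 2 / e" if p: "p \<in> polar S" for p
  proof (cases "p = 0")
    case False
    have "(e / 2 / norm p) *\<^sub>R p \<in> S"
      using e False by auto
    then have "inner ((e / 2 / norm p) *\<^sub>R p) p \<le> 1"
      using p by (auto simp: polar_def)
    then have "e / 2 * norm p \<le> 1"
      using False by (simp add: power2_norm_eq_inner[symmetric] power2_eq_square)
    then show ?thesis
      using e by (simp add: field_simps)
  qed (use e in simp)
  then show ?thesis
    by (auto simp: bounded_iff)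
qed

lemma compact_polar: "0 \<in> interior S \<Longrightarrow> compact (polar S)"
  by (simp add: compact_eq_bounded_closed closed_polar bounded_polar)

lemma inner_polar_less_1_if_interior:
  assumes "z \<in> interior L" "p \<in> polar L"
  shows "inner z p < 1"
proof (cases "p = 0")
  case False
  obtain e where e: "e > 0" "ball z e \<subseteq> L"
    using assms mem_interior by blast
  have "z + (e / 2 / norm p) *\<^sub>R p \<in> L"
    using e False by (auto simp: dist_norm)
  then have "inner (z + (e / 2 / norm p) *\<^sub>R p) p \<le> 1"
    using assms by (auto simp: polar_def)
  moreover have "inner (z + (e / 2 / norm p) *\<^sub>R p) p = inner z p + e / 2 * norm p"
    using False by (simp add: inner_add_left power2_norm_eq_inner[symmetric] power2_eq_square)
  moreover have "e / 2 * norm p > 0"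
    using e False by simp
  ultimately show ?thesis
    by linarith
qed simp

lemma polar_support_if_not_interior:
  fixes L :: "(real^'n) set"
  assumes "closed L" "convex L" "0 \<in> interior L" "z \<notin> interior L"
  obtains p where "p \<in> polar L" "inner z p = 1"
proof -
  have "0 \<notin> (\<lambda>y. y - z) ` interior L"
    using assms(4) by auto
  then obtain a where "a \<noteq> 0" and a: "\<forall>y\<in>interior L. inner a z \<le> inner a y"
    using separating_hyperplane_set_0[of "(\<lambda>y. y - z) ` interior L"] assms(2)
    by (auto simp: convex_interior convex_translation_subtract_eq inner_diff_right)
  have "closed {y. inner a z \<le> inner a y}"
    by (intro closed_Collect_le continuous_intros)
  moreover have "closure (interior L) = L"
    using assms convex_closure_interior[of L] closure_closed by auto
  ultimately have aL: "inner a z \<le> inner a y" if "y \<in> L" for y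
    using a that closure_minimal[of "interior L" "{y. inner a z \<le> inner a y}"] by auto
  obtain e where e: "e > 0" "ball 0 e \<subseteq> interior L"
    using assms(3) open_interior open_contains_ball by blast
  have "- (e / 2 / norm a) *\<^sub>R a \<in> interior L"
    using e \<open>a \<noteq> 0\<close> by auto
  then have "inner a z \<le> - e / 2 * norm a"
    using a \<open>a \<noteq> 0\<close> by (force simp: power2_norm_eq_inner[symmetric] power2_eq_square)
  moreover have "e / 2 * norm a > 0"
    using e \<open>a \<noteq> 0\<close> by simp
  ultimately have az: "inner a z < 0"
    by linarith
  show thesis
  proof
    show "(1 / inner a z) *\<^sub>R a \<in> polar L"
      using aL az by (auto simp: polar_def field_simps inner_commute)
    show "inner z ((1 / inner a z) *\<^sub>R a) = 1"
      using az by (simp add: inner_commute)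
  qed
qed

lemma contact_pair_if_inner_eq_1:
  assumes "K \<subseteq> L" "v \<in> K" "p \<in> polar L" "inner v p = 1"
  shows "contact_pair K L v p"
proof -
  have "v \<notin> interior L"
    using inner_polar_less_1_if_interior assms(3,4) by force
  then have "v \<notin> interior K"
    using interior_mono[OF assms(1)] by auto
  have "p \<in> polar K"
    using assms(1,3) by (auto simp: polar_def)
  have "p \<notin> interior (polar S)" if "v \<in> S" for S
  proof
    assume "p \<in> interior (polar S)"
    moreover have "v \<in> polar (polar S)"
      using that by (auto simp: polar_def inner_commute)
    ultimately show False
      using inner_polar_less_1_if_interior assms(4) by (force simp: inner_commute)
  qed
  then show ?thesis
    using assms \<open>v \<notin> interior L\<close> \<open>v \<notin> interior K\<close> \<open>p \<in> polar K\<close> closure_subset closed_polar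
    by (auto simp: contact_pair_def frontier_def inner_commute)
qed

lemma inner_tensor:
  fixes A :: "real^'n^'n"
  shows "inner A (tensor p x) = inner p (A *v x)"
  by (simp add: inner_vec_def tensor_def matrix_vector_mult_def sum_distrib_left mult_ac)

lemma inner_tensor_commutator:
  fixes A :: "real^'n^'n"
  shows "inner A (tensor p x - tensor x p) = inner p ((A - transpose A) *v x)"
proof -
  have "inner x (A *v p) = inner p (transpose A *v x)"
    by (simp add: dot_lmul_matrix[symmetric] inner_commute)
  then show ?thesis
    by (simp add: inner_diff_right inner_tensor matrix_vector_mult_diff_rdistrib)
qed

lemma inner_skew_part_self:
  fixes A :: "real^'n^'n"
  shows "inner y ((A - transpose A) *v y) = 0"
  using inner_tensor_commutator[of A y y] by simp

lemma convex_hull_positive_combination: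
  assumes "x \<in> convex hull S"
  obtains m :: nat and u :: "nat \<Rightarrow> real" and y
  where "m > 0" "\<And>i. i < m \<Longrightarrow> u i > 0 \<and> y i \<in> S" "(\<Sum>i<m. u i *\<^sub>R y i) = x"
proof -
  obtain T u where T: "finite T" "T \<subseteq> S" "\<forall>y\<in>T. 0 \<le> u y" "sum u T = 1"
    "(\<Sum>y\<in>T. u y *\<^sub>R y) = x"
    using assms unfolding convex_hull_explicit by blast
  define T' where "T' = {y\<in>T. u y > 0}"
  have "sum u T = sum u T'" "(\<Sum>y\<in>T. u y *\<^sub>R y) = (\<Sum>y\<in>T'. u y *\<^sub>R y)"
    unfolding T'_def by (rule sum.mono_neutral_right; use T in \<open>auto simp: less_le\<close>)+
  then have T': "sum u T' = 1" "(\<Sum>y\<in>T'. u y *\<^sub>R y) = x"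
    using T by simp_all
  have "finite T'"
    using T(1) unfolding T'_def by simp
  obtain y where y: "bij_betw y {..<card T'} T'"
    using ex_bij_betw_nat_finite[OF \<open>finite T'\<close>] by (auto simp: atLeast0LessThan)
  show thesis
  proof
    have "T' \<noteq> {}"
      using T'(1) by auto
    then show "card T' > 0"
      using \<open>finite T'\<close> by (simp add: card_gt_0_iff)
    show "u (y i) > 0 \<and> y i \<in> S" if "i < card T'" for i
      using that bij_betwE[OF y] T(2) unfolding T'_def by auto
    show "(\<Sum>i<card T'. u (y i) *\<^sub>R y i) = x"
      using T'(2) sum.reindex_bij_betw[OF y, of "\<lambda>y. u y *\<^sub>R y"] by simp
  qed
qed

definition balanced_contacts :: "(real^'n) set \<Rightarrow> (real^'n) set \<Rightarrow> bool" where
  "balanced_contacts K L \<longleftrightarrow> (\<exists>m::nat. \<exists>v p :: nat \<Rightarrow> real^'n. \<exists>\<alpha> :: nat \<Rightarrow> real.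
     m > 0 \<and> (\<forall>i<m. contact_pair K L (v i) (p i) \<and> \<alpha> i > 0) \<and>
     (\<Sum>i<m. \<alpha> i *\<^sub>R tensor (p i) (v i)) = (\<Sum>i<m. \<alpha> i *\<^sub>R tensor (v i) (p i)))"

lemma balanced_contacts_if_zero_in_convex_hull:
  assumes "\<And>v p. (v, p) \<in> C \<Longrightarrow> contact_pair K L v p"
    and "0 \<in> convex hull ((\<lambda>(v, p). tensor p v - tensor v p) ` C)"
  shows "balanced_contacts K L"
proof -
  define \<Phi> where "\<Phi> = (\<lambda>(v, p). tensor p v - tensor v p) ` C"
  obtain m :: nat and \<alpha> M where "m > 0" and M: "\<And>i. i < m \<Longrightarrow> \<alpha> i > 0 \<and> M i \<in> \<Phi>"
    and sum_M: "(\<Sum>i<m. \<alpha> i *\<^sub>R M i) = 0"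
    using convex_hull_positive_combination[of 0 \<Phi>] assms(2) unfolding \<Phi>_def by blast
  have "\<forall>i. \<exists>z. i < m \<longrightarrow> z \<in> C \<and> M i = tensor (snd z) (fst z) - tensor (fst z) (snd z)"
    using M unfolding \<Phi>_def by force
  then obtain z where z: "\<And>i. i < m \<Longrightarrow> z i \<in> C \<and>
      M i = tensor (snd (z i)) (fst (z i)) - tensor (fst (z i)) (snd (z i))"
    by metis
  define v p where "v i = fst (z i)" and "p i = snd (z i)" for i
  have "(\<Sum>i<m. \<alpha> i *\<^sub>R tensor (p i) (v i)) - (\<Sum>i<m. \<alpha> i *\<^sub>R tensor (v i) (p i)) =
      (\<Sum>i<m. \<alpha> i *\<^sub>R M i)"
    by (simp add: z v_def p_def scaleR_diff_right sum_subtractf[symmetric])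
  moreover have "contact_pair K L (v i) (p i)" if "i < m" for i
    using assms(1) z[OF that] unfolding v_def p_def by simp
  ultimately show ?thesis
    unfolding balanced_contacts_def using \<open>m > 0\<close> M sum_M
    by (intro exI[of _ m] exI[of _ v] exI[of _ p] exI[of _ \<alpha>]) auto
qed

lemma skew_separation_of_contacts:
  fixes K L :: "(real^'n) set"
  assumes "compact K" "K \<subseteq> L" "0 \<in> interior L" "\<not> balanced_contacts K L"
  obtains S :: "real^'n^'n" and b :: real
  where "\<And>y. inner y (S *v y) = 0" "b > 0"
    "\<And>x p. x \<in> K \<Longrightarrow> p \<in> polar L \<Longrightarrow> inner x p = 1 \<Longrightarrow> inner p (S *v x) > b"
proof -
  define C where "C = {(x, p) \<in> K \<times> polar L. inner x p = 1}"
  define \<phi> :: "(real^'n) \<times> (real^'n) \<Rightarrow> real^'n^'n" where "\<phi> = (\<lambda>(v, p). tensor p v - tensor v p)"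
  have "C = (K \<times> polar L) \<inter> {z. inner (fst z) (snd z) = 1}"
    unfolding C_def by auto
  then have "compact C"
    using assms(1,3) by (auto intro!: compact_Int_closed compact_Times compact_polar
        closed_Collect_eq continuous_intros)
  then have "compact (\<phi> ` C)"
    unfolding \<phi>_def tensor_def case_prod_beta by (intro compact_continuous_image continuous_intros)
  then have "closed (convex hull (\<phi> ` C))"
    by (simp add: compact_convex_hull compact_imp_closed)
  moreover have "0 \<notin> convex hull (\<phi> ` C)"
    using balanced_contacts_if_zero_in_convex_hull[of C K L] contact_pair_if_inner_eq_1[OF assms(2)]
      assms(4) unfolding C_def \<phi>_def by blast
  ultimately obtain A b where "0 < b" and A: "\<forall>M\<in>convex hull (\<phi> ` C). inner A M > b"
    using separating_hyperplane_closed_0[OF convex_convex_hull] by blast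
  show thesis
  proof
    show "inner y ((A - transpose A) *v y) = 0" for y
      by (rule inner_skew_part_self)
    show "b > 0"
      by (rule \<open>0 < b\<close>)
    show "inner p ((A - transpose A) *v x) > b"
      if "x \<in> K" "p \<in> polar L" "inner x p = 1" for x p
    proof -
      have "\<phi> (x, p) \<in> convex hull (\<phi> ` C)"
        using that hull_subset unfolding C_def by fastforce
      then have "inner A (\<phi> (x, p)) > b"
        using A by blast
      then show ?thesis
        by (simp add: \<phi>_def inner_tensor_commutator)
    qed
  qed
qed

lemma norm_add_skew_square:
  fixes S :: "real^'n^'n"
  assumes "\<And>y. inner y (S *v y) = 0"
  shows "(norm (y + c *\<^sub>R (S *v y)))\<^sup>2 = (norm y)\<^sup>2 + c\<^sup>2 * (norm (S *v y))\<^sup>2"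
  using norm_add_Pythagorean[of y "c *\<^sub>R (S *v y)"] assms[of y]
  by (simp add: orthogonal_def power_mult_distrib)

lemma invertible_id_plus_skew:
  fixes S :: "real^'n^'n"
  assumes "\<And>y. inner y (S *v y) = 0"
  shows "invertible (mat 1 + t *\<^sub>R S)"
  unfolding invertible_left_inverse matrix_left_invertible_ker
proof (intro allI impI)
  fix y
  assume "(mat 1 + t *\<^sub>R S) *v y = 0"
  then have "y + t *\<^sub>R (S *v y) = 0"
    by (simp add: matrix_vector_mult_add_rdistrib scaleR_matrix_vector_assoc)
  then have "(norm y)\<^sup>2 + t\<^sup>2 * (norm (S *v y))\<^sup>2 = 0"
    using norm_add_skew_square[OF assms, of y t] by simp
  then show "y = 0"
    by (simp add: add_nonneg_eq_0_iff)
qed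

lemma cayley_transform:
  fixes S :: "real^'n^'n"
  assumes skew: "\<And>y. inner y (S *v y) = 0"
  obtains R where "orthogonal_matrix R"
    "\<And>x. \<exists>y. norm y \<le> norm x \<and> R *v x = x - (2*t) *\<^sub>R (S *v x) + (2*t\<^sup>2) *\<^sub>R (S *v (S *v y))"
proof -
  define A where "A = mat 1 + t *\<^sub>R S"
  have A: "A *v y = y + t *\<^sub>R (S *v y)" for y
    by (simp add: A_def matrix_vector_mult_add_rdistrib scaleR_matrix_vector_assoc)
  obtain B where B: "A ** B = mat 1"
    using invertible_id_plus_skew[OF skew, of t] invertible_right_inverse unfolding A_def by blast
  define R where "R = (mat 1 - t *\<^sub>R S) ** B"
  have R: "R *v x = B *v x - t *\<^sub>R (S *v (B *v x))" for x
    by (simp add: R_def matrix_vector_mul_assoc[symmetric] matrix_vector_mult_diff_rdistrib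
        scaleR_matrix_vector_assoc)
  have AB: "A *v (B *v x) = x" for x
    by (simp add: matrix_vector_mul_assoc B)
  have norm_B: "(norm x)\<^sup>2 = (norm (B *v x))\<^sup>2 + t\<^sup>2 * (norm (S *v (B *v x)))\<^sup>2" for x
    using norm_add_skew_square[OF skew, of "B *v x" t] AB[of x] by (simp add: A)
  show thesis
  proof
    have "(norm (R *v x))\<^sup>2 = (norm x)\<^sup>2" for x
      using norm_B[of x] norm_add_skew_square[OF skew, of "B *v x" "- t"] by (simp add: R)
    then have "norm (R *v x) = norm x" for x
      by (metis norm_ge_zero power2_eq_iff_nonneg)
    then have "orthogonal_transformation ((*v) R)"
      by (simp add: orthogonal_transformation)
    then show "orthogonal_matrix R"
      using orthogonal_transformation_matrix[of "(*v) R"] by simp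
    fix x
    define y where "y = B *v x"
    have x: "x = y + t *\<^sub>R (S *v y)"
      using AB[of x] by (simp add: A y_def)
    have "(norm y)\<^sup>2 \<le> (norm x)\<^sup>2"
      using norm_B[of x] unfolding y_def by simp
    then have ny: "norm y \<le> norm x"
      by (simp add: power2_le_iff_abs_le)
    have Sx: "S *v x = S *v y + t *\<^sub>R (S *v (S *v y))"
      by (subst x) (simp add: matrix_vector_right_distrib matrix_vector_mult_scaleR)
    have "R *v x = y - t *\<^sub>R (S *v y)"
      unfolding R y_def ..
    also have "\<dots> = x - (2*t) *\<^sub>R (S *v x) + (2*t\<^sup>2) *\<^sub>R (S *v (S *v y))"
      unfolding Sx by (subst x) (simp add: algebra_simps power2_eq_square flip: scaleR_2)
    finally have "R *v x = x - (2*t) *\<^sub>R (S *v x) + (2*t\<^sup>2) *\<^sub>R (S *v (S *v y))" .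
    with ny show "\<exists>y. norm y \<le> norm x \<and>
        R *v x = x - (2*t) *\<^sub>R (S *v x) + (2*t\<^sup>2) *\<^sub>R (S *v (S *v y))"
      by blast
  qed
qed

lemma compact_uniform_gap:
  fixes f g :: "'a::t2_space \<Rightarrow> real"
  assumes "compact X" "continuous_on X f" "continuous_on X g"
    and "\<And>z. z \<in> X \<Longrightarrow> g z \<le> c" and "\<And>z. z \<in> X \<Longrightarrow> g z = c \<Longrightarrow> f z > b"
  obtains \<eta> where "\<eta> > 0" "\<And>z. z \<in> X \<Longrightarrow> f z \<le> b \<Longrightarrow> g z \<le> c - \<eta>"
proof (cases "\<exists>z\<in>X. f z \<le> b")
  case True
  define F where "F = {z \<in> X. f z \<le> b}"
  have "closed F"
    unfolding F_def
    using continuous_on_closed_Collect_le[OF assms(2) continuous_on_const]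
      compact_imp_closed[OF assms(1)] by blast
  then have "compact (X \<inter> F)"
    using assms(1) by (rule compact_Int_closed[rotated])
  then have "compact F"
    unfolding F_def by (simp add: Int_absorb1)
  moreover have "continuous_on F g"
    using assms(3) by (rule continuous_on_subset) (auto simp: F_def)
  moreover have "F \<noteq> {}"
    using True unfolding F_def by blast
  ultimately obtain z where z: "z \<in> F" "\<And>y. y \<in> F \<Longrightarrow> g y \<le> g z"
    using continuous_attains_sup[of F g] by auto
  have "z \<in> X" "f z \<le> b"
    using z(1) by (auto simp: F_def)
  then have "g z < c"
    using assms(4)[of z] assms(5)[of z] by fastforce
  show thesis
    by (rule that[of "c - g z"]) (use \<open>g z < c\<close> z(2) in \<open>auto simp: F_def\<close>)
next
  case False
  show thesis
    by (rule that[of 1]) (use False in auto)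
qed

lemma bounded_inner_matrix_vector:
  fixes A :: "real^'n^'m"
  assumes "bounded X" "bounded P"
  obtains B where "\<And>x p. x \<in> X \<Longrightarrow> p \<in> P \<Longrightarrow> \<bar>inner p (A *v x)\<bar> \<le> B"
proof -
  obtain a where a: "\<And>x. x \<in> X \<Longrightarrow> norm (A *v x) \<le> a"
    using bounded_linear_image[OF assms(1) matrix_vector_mul_bounded_linear[of A]]
    by (auto simp: bounded_iff)
  obtain c where c: "\<And>p. p \<in> P \<Longrightarrow> norm p \<le> c"
    using assms(2) by (auto simp: bounded_iff)
  have "\<bar>inner p (A *v x)\<bar> \<le> c * a" if "x \<in> X" "p \<in> P" for x p
    using Cauchy_Schwarz_ineq2[of p "A *v x"] a[OF that(1)] c[OF that(2)]
    by (meson order_trans mult_mono norm_ge_zero)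
  then show thesis
    using that by blast
qed

lemma perturbed_value_less_1:
  fixes g f e t B \<eta> b :: real
  assumes "g \<le> 1" "f \<le> b \<Longrightarrow> g \<le> 1 - \<eta>" "\<bar>f\<bar> \<le> B" "\<bar>e\<bar> \<le> B"
    and "0 < t" "t \<le> 1" "4 * t * B < \<eta>" "t * B < b"
  shows "g - 2 * t * f + 2 * t\<^sup>2 * e < 1"
proof -
  have e: "t\<^sup>2 * e \<le> t * (t * B)"
    using mult_left_mono[of e B "t\<^sup>2"] assms(4) by (simp add: power2_eq_square mult.assoc)
  show ?thesis
  proof (cases "f \<le> b")
    case True
    have "t * (t * B) \<le> t * B"
      using assms(3,5,6) mult_left_le_one_le[of "t * B" t] by simp
    moreover have "t * (- f) \<le> t * B"
      using assms(3,5) by (intro mult_left_mono) auto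
    ultimately show ?thesis
      using assms(2,7) True e by simp
  next
    case False
    then have "t * b < t * f"
      using assms(5) by simp
    moreover have "t * (t * B) < t * b"
      using assms(5,8) by simp
    ultimately show ?thesis
      using assms(1) e by linarith
  qed
qed

lemma small_step_perturbation_less_1:
  fixes \<eta> b B :: real
  assumes "\<eta> > 0" "b > 0"
  obtains t where "t > 0" "\<And>g f e. g \<le> 1 \<Longrightarrow> (f \<le> b \<Longrightarrow> g \<le> 1 - \<eta>) \<Longrightarrow>
    \<bar>f\<bar> \<le> B \<Longrightarrow> \<bar>e\<bar> \<le> B \<Longrightarrow> g - 2 * t * f + 2 * t\<^sup>2 * e < 1"
proof -
  have "\<forall>\<^sub>F t in at_right (0::real). 0 < t \<and> t \<le> 1 \<and> 4 * t * B < \<eta> \<and> t * B < b"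
  proof (intro eventually_conj)
    show "\<forall>\<^sub>F t in at_right (0::real). 0 < t"
      by (simp add: eventually_at_right_less)
    show "\<forall>\<^sub>F t in at_right (0::real). t \<le> 1"
      by (auto simp: eventually_at_right_field intro!: exI[of _ 1])
    have "((\<lambda>t. 4 * t * B) \<longlongrightarrow> 0) (at_right (0::real))"
      by (auto intro!: tendsto_eq_intros)
    then show "\<forall>\<^sub>F t in at_right (0::real). 4 * t * B < \<eta>"
      using assms(1) by (rule order_tendstoD(2))
    have "((\<lambda>t. t * B) \<longlongrightarrow> 0) (at_right (0::real))"
      by (auto intro!: tendsto_eq_intros)
    then show "\<forall>\<^sub>F t in at_right (0::real). t * B < b"
      using assms(2) by (rule order_tendstoD(2))
  qed
  then obtain t where t: "0 < t" "t \<le> 1" "4 * t * B < \<eta>" "t * B < b"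
    using eventually_happens' trivial_limit_at_right_real by blast
  show thesis
    using that[of t] perturbed_value_less_1[OF _ _ _ _ t] t(1) by blast
qed

lemma contact_gap:
  fixes K L :: "(real^'n) set" and S :: "real^'n^'n"
  assumes "compact K" "K \<subseteq> L" "0 \<in> interior L"
    and "\<And>x p. x \<in> K \<Longrightarrow> p \<in> polar L \<Longrightarrow> inner x p = 1 \<Longrightarrow> inner p (S *v x) > b"
  obtains \<eta> where "\<eta> > 0"
    "\<And>x p. x \<in> K \<Longrightarrow> p \<in> polar L \<Longrightarrow> inner p (S *v x) \<le> b \<Longrightarrow> inner x p \<le> 1 - \<eta>"
proof -
  have "compact (K \<times> polar L)"
    using assms(1) compact_polar[OF assms(3)] by (rule compact_Times)
  moreover have "continuous_on (K \<times> polar L) (\<lambda>z. inner (snd z) (S *v fst z))"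
    by (intro continuous_intros bounded_linear.continuous_on[OF matrix_vector_mul_bounded_linear])
  moreover have "continuous_on (K \<times> polar L) (\<lambda>z. inner (fst z) (snd z))"
    by (intro continuous_intros)
  moreover have "inner (fst z) (snd z) \<le> 1" if "z \<in> K \<times> polar L" for z
    using assms(2) that by (auto simp: polar_def)
  ultimately obtain \<eta> where "\<eta> > 0" and \<eta>: "\<And>z. z \<in> K \<times> polar L \<Longrightarrow>
      inner (snd z) (S *v fst z) \<le> b \<Longrightarrow> inner (fst z) (snd z) \<le> 1 - \<eta>"
    by (rule compact_uniform_gap) (use assms(4) in auto)
  then show thesis
    using that[of \<eta>] \<eta> by auto
qed

lemma rotation_into_interior:
  fixes K L :: "(real^'n) set" and S :: "real^'n^'n"
  assumes "compact K" "K \<subseteq> L" "closed L" "convex L" "0 \<in> interior L"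
    and skew: "\<And>y. inner y (S *v y) = 0" and "b > 0"
    and contact: "\<And>x p. x \<in> K \<Longrightarrow> p \<in> polar L \<Longrightarrow> inner x p = 1 \<Longrightarrow> inner p (S *v x) > b"
  obtains R where "orthogonal_matrix R" "(\<lambda>x. R *v x) ` K \<subseteq> interior L"
proof -
  obtain \<eta> where "\<eta> > 0" and \<eta>:
    "\<And>x p. x \<in> K \<Longrightarrow> p \<in> polar L \<Longrightarrow> inner p (S *v x) \<le> b \<Longrightarrow> inner x p \<le> 1 - \<eta>"
    using contact_gap[OF assms(1,2,5) contact] by blast
  obtain r where r: "K \<subseteq> cball 0 r"
    using compact_imp_bounded[OF assms(1)] by (auto simp: bounded_iff subset_iff)
  have "bounded (polar L)"
    using assms(5) by (rule bounded_polar)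
  obtain B1 where B1: "\<And>y p. y \<in> cball 0 r \<Longrightarrow> p \<in> polar L \<Longrightarrow> \<bar>inner p (S *v y)\<bar> \<le> B1"
    using bounded_inner_matrix_vector[OF bounded_cball \<open>bounded (polar L)\<close>, of 0 r S] by blast
  obtain B2 where B2: "\<And>y p. y \<in> cball 0 r \<Longrightarrow> p \<in> polar L \<Longrightarrow> \<bar>inner p ((S ** S) *v y)\<bar> \<le> B2"
    using bounded_inner_matrix_vector[OF bounded_cball \<open>bounded (polar L)\<close>, of 0 r "S ** S"]
    by blast
  obtain t where "t > 0" and t: "\<And>g f e. g \<le> 1 \<Longrightarrow> (f \<le> b \<Longrightarrow> g \<le> 1 - \<eta>) \<Longrightarrow>
      \<bar>f\<bar> \<le> max B1 B2 \<Longrightarrow> \<bar>e\<bar> \<le> max B1 B2 \<Longrightarrow> g - 2 * t * f + 2 * t\<^sup>2 * e < 1"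
    using small_step_perturbation_less_1[OF \<open>\<eta> > 0\<close> \<open>b > 0\<close>] by blast
  obtain R where "orthogonal_matrix R" and R: "\<And>x. \<exists>y. norm y \<le> norm x \<and>
      R *v x = x - (2*t) *\<^sub>R (S *v x) + (2*t\<^sup>2) *\<^sub>R (S *v (S *v y))"
    using cayley_transform[OF skew] by blast
  have "R *v x \<in> interior L" if "x \<in> K" for x
  proof (rule ccontr)
    assume "R *v x \<notin> interior L"
    then obtain p where "p \<in> polar L" and p: "inner (R *v x) p = 1"
      using polar_support_if_not_interior assms(3-5) by metis
    obtain y where "norm y \<le> norm x"
      and Rx: "R *v x = x - (2*t) *\<^sub>R (S *v x) + (2*t\<^sup>2) *\<^sub>R (S *v (S *v y))"
      using R by blast
    have "x \<in> cball 0 r" "y \<in> cball 0 r"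
      using that r \<open>norm y \<le> norm x\<close> by auto
    have "inner p (R *v x) =
        inner x p - 2 * t * inner p (S *v x) + 2 * t\<^sup>2 * inner p ((S ** S) *v y)"
      by (simp add: Rx inner_diff_right inner_add_right inner_commute matrix_vector_mul_assoc)
    also have "\<dots> < 1"
    proof (rule t)
      show "inner x p \<le> 1"
        using assms(2) \<open>x \<in> K\<close> \<open>p \<in> polar L\<close> by (auto simp: polar_def)
      show "inner p (S *v x) \<le> b \<Longrightarrow> inner x p \<le> 1 - \<eta>"
        using \<eta> \<open>x \<in> K\<close> \<open>p \<in> polar L\<close> by blast
      show "\<bar>inner p (S *v x)\<bar> \<le> max B1 B2" "\<bar>inner p ((S ** S) *v y)\<bar> \<le> max B1 B2"
        using B1 B2 \<open>x \<in> cball 0 r\<close> \<open>y \<in> cball 0 r\<close> \<open>p \<in> polar L\<close> by force+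
    qed
    finally show False
      using p by (simp add: inner_commute)
  qed
  then show thesis
    using that \<open>orthogonal_matrix R\<close> by blast
qed

theorem mainTheorem6:
  fixes K L :: "(real^'n) set"
  assumes "convex_body K" and "convex_body L" and "K \<subseteq> L"
    and "0 \<in> interior (K \<inter> L)"
    and "\<not> (\<exists>m::nat. \<exists>v p :: nat \<Rightarrow> real^'n. \<exists>\<alpha> :: nat \<Rightarrow> real.
            m > 0 \<and> (\<forall>i<m. contact_pair K L (v i) (p i) \<and> \<alpha> i > 0) \<and>
            (\<Sum>i<m. \<alpha> i *\<^sub>R tensor (p i) (v i)) = (\<Sum>i<m. \<alpha> i *\<^sub>R tensor (v i) (p i)))"
  shows "\<exists>\<epsilon>>0. \<exists>R :: real \<Rightarrow> real^'n^'n.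
           R differentiable_on {0<..\<epsilon>} \<and>
           (\<forall>t\<in>{0<..\<epsilon>}. orthogonal_matrix (R t) \<and> (\<lambda>x. R t *v x) ` K \<subseteq> interior L)"
proof -
  have "compact K" "compact L" "convex L"
    using assms(1,2) by (auto simp: convex_body_def)
  have "0 \<in> interior L"
    using assms(4) interior_mono[of "K \<inter> L" L] by blast
  have "\<not> balanced_contacts K L"
    using assms(5) unfolding balanced_contacts_def .
  then obtain S :: "real^'n^'n" and b where "\<And>y. inner y (S *v y) = 0" "b > 0"
    "\<And>x p. x \<in> K \<Longrightarrow> p \<in> polar L \<Longrightarrow> inner x p = 1 \<Longrightarrow> inner p (S *v x) > b"
    using skew_separation_of_contacts \<open>compact K\<close> assms(3) \<open>0 \<in> interior L\<close> by metis
  then obtain R where "orthogonal_matrix R" "(\<lambda>x. R *v x) ` K \<subseteq> interior L"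
    using rotation_into_interior \<open>compact K\<close> assms(3) compact_imp_closed[OF \<open>compact L\<close>]
      \<open>convex L\<close> \<open>0 \<in> interior L\<close> by metis
  then show ?thesis
    by (intro exI[of _ 1] conjI exI[of _ "\<lambda>_. R"]) auto
qed

end
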